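(* Let $B_1,B_2$ be finite commutative groups and $q_1,\dots,q_n>1$ integers, $0\le s\le n$. If $q_1q_2\cdots q_s$ is coprime to $|B_2|$ and $q_{s+1}\cdots q_n$ is coprime to $|B_1|$, then $$(B_1\times B_2)\binom{X_1,\dots,X_n}{\mathbb{Z}_{q_1}\times\cdots\times\mathbb{Z}_{q_n}}=B_1\binom{X_1,\dots,X_s}{\mathbb{Z}_{q_1}\times\cdots\times\mathbb{Z}_{q_s}}\times B_2\binom{X_{s+1},\dots,X_n}{\mathbb{Z}_{q_{s+1}}\times\cdots\times\mathbb{Z}_{q_n}},$$ i.e. a polyfract $(P_1,P_2)$ over $B_1\times B_2$ is $(q_1,\dots,q_n)$-periodic if and only if $P_1$ involves only $X_1,\dots,X_s$ and is $(q_1,\dots,q_s)$-periodic, and $P_2$ involves only $X_{s+1},\dots,X_n$ and is $(q_{s+1},\dots,q_n)$-periodic.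
   Context: $\mathbb{Z}_r=\mathbb{Z}/r\mathbb{Z}$; $\binom{X}{\delta}=X(X-1)\cdots(X-\delta+1)/\delta!$, $\binom{X}{0}=1$. For a finitely generated commutative group $B$, a $B$-polyfract in $X_1,\dots,X_n$ is a formal finite sum $P=\sum_{\delta\in\mathbb{N}^n}P_\delta\prod_j\binom{X_j}{\delta_j}$ with $P_\delta\in B$, evaluated at $x\in\mathbb{Z}^n$ by $P(x)=\sum_\delta(\prod_j\binom{x_j}{\delta_j})P_\delta$; a polyfract over $B_1\times B_2$ is identified with the pair of its coordinate polyfracts. "$P$ involves $X_j$" means some $\delta$ with $\delta_j>0$ has $P_\delta\ne0$. $B\binom{X_1,\dots,X_n}{\mathbb{Z}_{q_1}\times\cdots\times\mathbb{Z}_{q_n}}$ is the set of $B$-polyfracts whose evaluation map on $\mathbb{Z}^n$ is $q_j$-periodic in the $j$-th variable for all $j$. *)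

theory Defs
  imports Main "HOL-Library.Product_Plus"
begin

definition zscale :: "int \<Rightarrow> 'b::ab_group_add \<Rightarrow> 'b" where
  "zscale k b = (if 0 \<le> k then (\<Sum>i<nat k. b) else - (\<Sum>i<nat (- k). b))"

(* binom(x, d) = x(x-1)...(x-d+1)/d! for integer x (exact division) *)
definition zbinom :: "int \<Rightarrow> nat \<Rightarrow> int" where
  "zbinom x d = (\<Prod>i<d. x - int i) div fact d"

(* A B-polyfract in the n variables X_0,...,X_{n-1} (0-based indices):
   a coefficient function on multi-indices delta :: nat => nat with finite support,
   where only multi-indices with delta j = 0 for j >= n carry nonzero coefficients.
   P delta is the coefficient of prod_j binom(X_j, delta_j). *)
definition polyfract :: "nat \<Rightarrow> ((nat \<Rightarrow> nat) \<Rightarrow> 'b::ab_group_add) \<Rightarrow> bool" where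
  "polyfract n P \<longleftrightarrow> finite {\<delta>. P \<delta> \<noteq> 0} \<and> (\<forall>\<delta>. P \<delta> \<noteq> 0 \<longrightarrow> (\<forall>j. n \<le> j \<longrightarrow> \<delta> j = 0))"

definition pf_eval :: "nat \<Rightarrow> ((nat \<Rightarrow> nat) \<Rightarrow> 'b::ab_group_add) \<Rightarrow> (nat \<Rightarrow> int) \<Rightarrow> 'b" where
  "pf_eval n P x = (\<Sum>\<delta>\<in>{\<delta>. P \<delta> \<noteq> 0}. zscale (\<Prod>j<n. zbinom (x j) (\<delta> j)) (P \<delta>))"

definition involves :: "((nat \<Rightarrow> nat) \<Rightarrow> 'b::zero) \<Rightarrow> nat \<Rightarrow> bool" where
  "involves P j \<longleftrightarrow> (\<exists>\<delta>. 0 < \<delta> j \<and> P \<delta> \<noteq> 0)"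

(* Membership in B binom(X_0..X_{n-1} ; Z_{q_0} x ... x Z_{q_{n-1}}):
   a polyfract whose evaluation map on Z^n is q_j-periodic in the j-th variable. *)
definition periodic_pf :: "nat \<Rightarrow> (nat \<Rightarrow> int) \<Rightarrow> ((nat \<Rightarrow> nat) \<Rightarrow> 'b::ab_group_add) \<Rightarrow> bool" where
  "periodic_pf n q P \<longleftrightarrow> polyfract n P \<and>
     (\<forall>x j. j < n \<longrightarrow> pf_eval n P (x(j := x j + q j)) = pf_eval n P x)"

end

theory Submission
  imports Defs "HOL.Binomial_Plus"
begin

(* Evaluation is componentwise, so (P1, P2) is periodic iff P1 and P2 are, and a polyfract is
   trivially periodic in every variable it does not involve. The heart of the matter is the
   converse: if a B-polyfract is q-periodic in X_j and q b = 0 forces b = 0 in B (which holds when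
   q is coprime to |B|, since |B| b = 0), then it does not involve X_j. Write it as
   sum_d binom(X_j, d) c_d with coefficients c_d in the other variables. The forward difference in
   X_j preserves periodicity and shifts the coefficients down, so by induction on the degree only
   c_0 + t c_1 remains, where periodicity gives q c_1 = 0. Hence every c_d with d > 0 vanishes
   identically, and then so do its own coefficients. As q_j is invertible on B2 for j < s and on
   B1 for j >= s, P1 lives in the first s variables and P2 in the remaining ones. *)

lemma zscale_0_left [simp]: "zscale 0 b = 0"
  by (simp add: zscale_def)

lemma zscale_1_left [simp]: "zscale 1 b = b"
  by (simp add: zscale_def)

lemma zscale_0_right [simp]: "zscale k 0 = 0"
  by (simp add: zscale_def)

lemma zscale_add_1_left: "zscale (k + 1) b = zscale k b + b"
proof (cases "0 \<le> k")
  case True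
  then have "nat (k + 1) = Suc (nat k)" by simp
  with True show ?thesis by (simp add: zscale_def)
next
  case False
  show ?thesis
  proof (cases "k = -1")
    case True then show ?thesis by (simp add: zscale_def)
  next
    case not_minus_1: False
    with False have "nat (- k) = Suc (nat (- (k + 1)))" by simp
    with False not_minus_1 show ?thesis by (simp add: zscale_def)
  qed
qed

lemma zscale_diff_1_left: "zscale (k - 1) b = zscale k b - b"
  using zscale_add_1_left[of "k - 1" b] by (simp add: eq_diff_eq)

lemma zscale_add_left: "zscale (k + l) b = zscale k b + zscale l b"
proof (induction l rule: int_induct[where k = 0])
  case (step1 i)
  then show ?case
    using zscale_add_1_left[of "k + i" b] zscale_add_1_left[of i b] by (simp add: ac_simps)
next
  case (step2 i)
  have "zscale (k + (i - 1)) b = zscale (k + i) b - b"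
    using zscale_diff_1_left[of "k + i" b] by (simp add: add_diff_eq)
  with step2 show ?case
    using zscale_diff_1_left[of i b] by (simp add: add_diff_eq)
qed simp

lemma zscale_mult_left: "zscale (k * l) b = zscale k (zscale l b)"
proof (induction k rule: int_induct[where k = 0])
  case (step1 i)
  then show ?case
    using zscale_add_left[of "i * l" l b] zscale_add_1_left[of i "zscale l b"]
    by (simp add: distrib_right)
next
  case (step2 i)
  have "zscale ((i - 1) * l) b + zscale l b = zscale (i * l) b"
    by (simp add: zscale_add_left[symmetric] algebra_simps)
  with step2 show ?case
    using zscale_diff_1_left[of i "zscale l b"] by (metis add_diff_cancel)
qed simp

lemma zscale_add_right: "zscale k (a + b) = zscale k a + zscale k b"
proof (induction k rule: int_induct[where k = 0])
  case (step1 i)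
  then show ?case
    using zscale_add_1_left[of i "a + b"] zscale_add_1_left[of i a] zscale_add_1_left[of i b]
    by (simp add: ac_simps)
next
  case (step2 i)
  then show ?case by (simp add: zscale_diff_1_left algebra_simps)
qed simp

lemma zscale_sum_right: "zscale k (\<Sum>x\<in>A. f x) = (\<Sum>x\<in>A. zscale k (f x))"
  by (induction A rule: infinite_finite_induct) (auto simp: zscale_add_right)

lemma fst_zscale: "fst (zscale k p) = zscale k (fst p)"
  by (simp add: zscale_def fst_sum)

lemma snd_zscale: "snd (zscale k p) = zscale k (snd p)"
  by (simp add: zscale_def snd_sum)

lemma zscale_card_UNIV: "zscale (int (card (UNIV :: 'g::{ab_group_add,finite} set))) (b::'g) = 0"
proof -
  have "(\<Sum>y\<in>UNIV. y) = (\<Sum>y\<in>UNIV. y + b)"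
    by (rule sum.reindex_bij_witness[where j = "\<lambda>y. y - b" and i = "\<lambda>y. y + b"]) auto
  then have "(\<Sum>y\<in>(UNIV :: 'g set). b) = 0"
    by (simp add: sum.distrib)
  moreover have "(\<Sum>y\<in>A. b) = (\<Sum>i<card A. b)" if "finite A" for A :: "'g set"
    using that by (induction A rule: finite_induct) (auto simp: add.commute)
  ultimately show ?thesis
    by (simp add: zscale_def)
qed

lemma zscale_eq_0_coprime_card:
  fixes b :: "'g::{ab_group_add,finite}"
  assumes "coprime k (int (card (UNIV :: 'g set)))" and "zscale k b = 0"
  shows "b = 0"
proof -
  obtain u v where "u * k + v * int (card (UNIV :: 'g set)) = 1"
    using bezout_int[of k "int (card (UNIV :: 'g set))"] assms(1) by auto
  then have "b = zscale (u * k + v * int (card (UNIV :: 'g set))) b"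
    by simp
  also have "\<dots> = 0"
    by (simp add: zscale_add_left zscale_mult_left assms(2) zscale_card_UNIV)
  finally show ?thesis .
qed

lemma zscale_eq_0_coprime_prod_card:
  fixes b :: "'g::{ab_group_add,finite}"
  assumes "coprime (\<Prod>i\<in>A. q i) (int (card (UNIV :: 'g set)))" "finite A" "j \<in> A"
    and "zscale (q j) b = 0"
  shows "b = 0"
proof (rule zscale_eq_0_coprime_card[OF _ assms(4)])
  show "coprime (q j) (int (card (UNIV :: 'g set)))"
    using assms(2,3) by (intro coprime_divisors[OF _ dvd_refl assms(1)] dvd_prodI)
qed

lemma zbinom_add_1_Suc: "zbinom (x + 1) (Suc k) = zbinom x k + zbinom x (Suc k)"
  using gbinomial_int_Suc_Suc[of x k] unfolding gbinomial_prod_rev zbinom_def atLeast0LessThan .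

lemma zbinom_0_right [simp]: "zbinom x 0 = 1"
  by (simp add: zbinom_def)

lemma zbinom_1_right [simp]: "zbinom x (Suc 0) = x"
  by (simp add: zbinom_def)

lemma zbinom_of_nat_self [simp]: "zbinom (int m) m = 1"
  using gbinomial_int_n_n[of m] unfolding gbinomial_prod_rev zbinom_def atLeast0LessThan .

lemma zbinom_of_nat_eq_0: "m < k \<Longrightarrow> zbinom (int m) k = 0"
  using gbinomial_eq_0_int[of m k] unfolding gbinomial_prod_rev zbinom_def atLeast0LessThan .

lemma periodic_binomial_expansion_coeff_eq_0:
  fixes c :: "nat \<Rightarrow> 'g::ab_group_add"
  assumes kill: "\<And>b. zscale q b = 0 \<Longrightarrow> b = (0::'g)"
    and expansion: "\<And>t. g t = (\<Sum>d\<le>N. zscale (zbinom t d) (c d))"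
    and periodic: "\<And>t. g (t + q) = g t"
    and "1 \<le> d" "d \<le> N"
  shows "c d = 0"
  using expansion periodic assms(4,5)
proof (induction N arbitrary: g c d)
  case (Suc M)
  have g: "g t = c 0 + (\<Sum>d\<le>M. zscale (zbinom t (Suc d)) (c (Suc d)))" for t
    using Suc.prems(1) by (simp del: sum.atMost_Suc add: sum.atMost_Suc_shift)
  have diff: "g (t + 1) - g t = (\<Sum>d\<le>M. zscale (zbinom t d) (c (Suc d)))" for t
    using g[of "t + 1"] g[of t] by (simp add: zbinom_add_1_Suc zscale_add_left sum.distrib)
  have higher: "c (Suc d') = 0" if "1 \<le> d'" "d' \<le> M" for d'
  proof (rule Suc.IH[of "\<lambda>t. g (t + 1) - g t" "\<lambda>d. c (Suc d)"])
    show "g (t + q + 1) - g (t + q) = g (t + 1) - g t" for t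
      using Suc.prems(2)[of t] Suc.prems(2)[of "t + 1"] by (simp add: ac_simps)
  qed (use diff that in auto)
  show ?case
  proof (cases "d = 1")
    case True
    have "(\<Sum>d\<le>M. zscale (zbinom t (Suc d)) (c (Suc d))) = zscale t (c 1)" for t
    proof -
      have "(\<Sum>d\<le>M. zscale (zbinom t (Suc d)) (c (Suc d)))
          = (\<Sum>d\<in>{0}. zscale (zbinom t (Suc d)) (c (Suc d)))"
        by (rule sum.mono_neutral_right) (auto simp: higher)
      then show ?thesis by simp
    qed
    then have "g t = c 0 + zscale t (c 1)" for t
      using g by simp
    then have "zscale q (c 1) = 0"
      using Suc.prems(2)[of 0] by simp
    with True kill show ?thesis by simp
  next
    case False
    with Suc.prems(3,4) obtain d' where "d = Suc d'" "1 \<le> d'" "d' \<le> M"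
      by (cases d) auto
    with higher show ?thesis by simp
  qed
qed simp

lemma binomial_sum_eq_0_imp_coeff_eq_0:
  fixes c :: "(nat \<Rightarrow> nat) \<Rightarrow> 'g::ab_group_add"
  assumes "finite J" "finite S"
    and inj: "\<And>\<delta> \<delta>'. \<delta> \<in> S \<Longrightarrow> \<delta>' \<in> S \<Longrightarrow> (\<forall>i\<in>J. \<delta> i = \<delta>' i) \<Longrightarrow> \<delta> = \<delta>'"
    and zero: "\<And>x. (\<Sum>\<delta>\<in>S. zscale (\<Prod>i\<in>J. zbinom (x i) (\<delta> i)) (c \<delta>)) = 0"
    and "\<delta> \<in> S"
  shows "c \<delta> = 0"
proof (rule ccontr)
  assume "c \<delta> \<noteq> 0"
  define S' where "S' = {\<delta>\<in>S. c \<delta> \<noteq> 0}"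
  define deg where "deg \<delta> = (\<Sum>i\<in>J. \<delta> i)" for \<delta> :: "nat \<Rightarrow> nat"
  have "finite S'" "S' \<noteq> {}"
    using \<open>finite S\<close> \<open>c \<delta> \<noteq> 0\<close> \<open>\<delta> \<in> S\<close> by (auto simp: S'_def)
  \<comment> \<open>evaluate at the exponent of a nonzero coefficient of minimal total degree\<close>
  define \<delta>0 where "\<delta>0 = arg_min_on deg S'"
  have "\<delta>0 \<in> S'" and min: "\<And>\<delta>. \<delta> \<in> S' \<Longrightarrow> deg \<delta>0 \<le> deg \<delta>"
    unfolding \<delta>0_def using \<open>finite S'\<close> \<open>S' \<noteq> {}\<close>
    by (simp_all add: arg_min_if_finite(1) arg_min_least)
  have "\<delta>0 \<in> S" using \<open>\<delta>0 \<in> S'\<close> by (simp add: S'_def)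
  define x where "x i = int (\<delta>0 i)" for i
  have other: "zscale (\<Prod>i\<in>J. zbinom (x i) (\<delta> i)) (c \<delta>) = 0" if "\<delta> \<in> S" "\<delta> \<noteq> \<delta>0" for \<delta>
  proof (cases "\<exists>i\<in>J. \<delta>0 i < \<delta> i")
    case True
    then have "(\<Prod>i\<in>J. zbinom (x i) (\<delta> i)) = 0"
      using \<open>finite J\<close> by (auto simp: x_def intro: zbinom_of_nat_eq_0)
    then show ?thesis by simp
  next
    case False
    have "\<not> (\<forall>i\<in>J. \<delta> i = \<delta>0 i)"
      using inj[OF that(1) \<open>\<delta>0 \<in> S\<close>] that(2) by blast
    with False obtain i where "i \<in> J" "\<delta> i < \<delta>0 i"
      by (auto simp: not_less order.order_iff_strict)
    with False have "deg \<delta> < deg \<delta>0"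
      unfolding deg_def using \<open>finite J\<close> by (intro sum_strict_mono_ex1) (auto simp: not_less)
    with min[of \<delta>] that(1) have "c \<delta> = 0" by (auto simp: S'_def)
    then show ?thesis by simp
  qed
  have "0 = (\<Sum>\<delta>\<in>S. zscale (\<Prod>i\<in>J. zbinom (x i) (\<delta> i)) (c \<delta>))"
    using zero by simp
  also have "\<dots> = zscale (\<Prod>i\<in>J. zbinom (x i) (\<delta>0 i)) (c \<delta>0)"
    by (subst sum.remove[OF \<open>finite S\<close> \<open>\<delta>0 \<in> S\<close>]) (simp add: other)
  also have "\<dots> = c \<delta>0"
    by (simp add: x_def)
  finally show False
    using \<open>\<delta>0 \<in> S'\<close> by (simp add: S'_def)
qed

lemma polyfract_iff_involves:
  "polyfract n P \<longleftrightarrow> finite {\<delta>. P \<delta> \<noteq> 0} \<and> (\<forall>j. involves P j \<longrightarrow> j < n)"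
  unfolding polyfract_def involves_def by (auto simp: not_le) (metis neq0_conv not_le)

lemma polyfract_index_eq_0:
  assumes "polyfract n P" "P \<delta> \<noteq> 0" "n \<le> j"
  shows "\<delta> j = 0"
  using assms unfolding polyfract_def by blast

lemma polyfract_prod_iff:
  fixes P :: "(nat \<Rightarrow> nat) \<Rightarrow> 'a::ab_group_add \<times> 'b::ab_group_add"
  shows "polyfract n P \<longleftrightarrow> polyfract n (fst \<circ> P) \<and> polyfract n (snd \<circ> P)"
proof -
  have "{\<delta>. P \<delta> \<noteq> 0} = {\<delta>. (fst \<circ> P) \<delta> \<noteq> 0} \<union> {\<delta>. (snd \<circ> P) \<delta> \<noteq> 0}"
    by (auto simp: prod_eq_iff)
  then show ?thesis
    unfolding polyfract_def by (auto simp: prod_eq_iff)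
qed

lemma pf_eval_superset:
  assumes "finite T" "{\<delta>. P \<delta> \<noteq> 0} \<subseteq> T"
  shows "pf_eval n P x = (\<Sum>\<delta>\<in>T. zscale (\<Prod>j<n. zbinom (x j) (\<delta> j)) (P \<delta>))"
  unfolding pf_eval_def by (rule sum.mono_neutral_left) (use assms in auto)

lemma pf_eval_prod:
  assumes "polyfract n P"
  shows "pf_eval n P x = (pf_eval n (fst \<circ> P) x, pf_eval n (snd \<circ> P) x)"
proof -
  have fin: "finite {\<delta>. P \<delta> \<noteq> 0}"
    using assms by (simp add: polyfract_def)
  have "pf_eval n (fst \<circ> P) x = (\<Sum>\<delta>\<in>{\<delta>. P \<delta> \<noteq> 0}. zscale (\<Prod>j<n. zbinom (x j) (\<delta> j)) ((fst \<circ> P) \<delta>))"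
    by (rule pf_eval_superset[OF fin]) auto
  moreover have "pf_eval n (snd \<circ> P) x = (\<Sum>\<delta>\<in>{\<delta>. P \<delta> \<noteq> 0}. zscale (\<Prod>j<n. zbinom (x j) (\<delta> j)) ((snd \<circ> P) \<delta>))"
    by (rule pf_eval_superset[OF fin]) auto
  ultimately show ?thesis
    unfolding pf_eval_def[of n P] by (simp add: fst_sum snd_sum fst_zscale snd_zscale prod_eq_iff)
qed

lemma periodic_pf_prod_iff:
  fixes P :: "(nat \<Rightarrow> nat) \<Rightarrow> 'a::ab_group_add \<times> 'b::ab_group_add"
  shows "periodic_pf n q P \<longleftrightarrow> periodic_pf n q (fst \<circ> P) \<and> periodic_pf n q (snd \<circ> P)"
proof (cases "polyfract n P")
  case True
  then show ?thesis
    by (auto simp: periodic_pf_def pf_eval_prod[OF True] polyfract_prod_iff[of n P] prod_eq_iff)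
next
  case False
  then show ?thesis
    by (auto simp: periodic_pf_def polyfract_prod_iff[of n P])
qed

lemma pf_eval_polyfract_le:
  assumes "polyfract m P" "m \<le> n"
  shows "pf_eval n P x = pf_eval m P x"
  unfolding pf_eval_def
proof (intro sum.cong refl arg_cong2[where f = zscale])
  fix \<delta> assume "\<delta> \<in> {\<delta>. P \<delta> \<noteq> 0}"
  then have "\<delta> j = 0" if "m \<le> j" for j
    using assms(1) that by (simp add: polyfract_def)
  then show "(\<Prod>j<n. zbinom (x j) (\<delta> j)) = (\<Prod>j<m. zbinom (x j) (\<delta> j))"
    by (intro prod.mono_neutral_right) (use assms(2) in auto)
qed

lemma pf_eval_fun_upd_not_involves:
  assumes "\<not> involves P j"
  shows "pf_eval n P (x(j := v)) = pf_eval n P x"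
  unfolding pf_eval_def
proof (intro sum.cong refl arg_cong2[where f = zscale] prod.cong)
  fix \<delta> i assume "\<delta> \<in> {\<delta>. P \<delta> \<noteq> 0}"
  then have "\<delta> j = 0"
    using assms by (auto simp: involves_def)
  then show "zbinom ((x(j := v)) i) (\<delta> i) = zbinom (x i) (\<delta> i)"
    by (cases "i = j") auto
qed

(* P \<circ> shift_index s is P read as a polyfract in X_s, X_(s+1), ..., renumbered from 0. *)
definition shift_index :: "nat \<Rightarrow> (nat \<Rightarrow> nat) \<Rightarrow> nat \<Rightarrow> nat" where
  "shift_index s \<delta> = (\<lambda>j. if j < s then 0 else \<delta> (j - s))"

lemma shift_index_add [simp]: "shift_index s \<delta> (j + s) = \<delta> j"
  by (simp add: shift_index_def)

lemma inj_shift_index: "inj (shift_index s)"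
proof (rule injI)
  fix \<delta> \<delta>' assume "shift_index s \<delta> = shift_index s \<delta>'"
  then have "shift_index s \<delta> (j + s) = shift_index s \<delta>' (j + s)" for j
    by simp
  then show "\<delta> = \<delta>'"
    by auto
qed

lemma polyfract_comp_shift_index:
  assumes "polyfract n P"
  shows "polyfract (n - s) (P \<circ> shift_index s)"
  unfolding polyfract_def
proof safe
  have "{\<delta>. (P \<circ> shift_index s) \<delta> \<noteq> 0} = shift_index s -` {\<delta>. P \<delta> \<noteq> 0}"
    by auto
  moreover have "finite (shift_index s -` {\<delta>. P \<delta> \<noteq> 0})"
    using assms by (intro finite_vimageI[OF _ inj_shift_index]) (simp add: polyfract_def)
  ultimately show "finite {\<delta>. (P \<circ> shift_index s) \<delta> \<noteq> 0}"
    by simp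
next
  fix \<delta> j assume "(P \<circ> shift_index s) \<delta> \<noteq> 0" "n - s \<le> j"
  then have "shift_index s \<delta> (j + s) = 0"
    using assms unfolding polyfract_def by (metis comp_apply le_diff_conv)
  then show "\<delta> j = 0"
    by simp
qed

lemma pf_eval_comp_shift_index:
  assumes "polyfract n P" "s \<le> n" and low: "\<And>j. j < s \<Longrightarrow> \<not> involves P j"
  shows "pf_eval n P x = pf_eval (n - s) (P \<circ> shift_index s) (\<lambda>k. x (k + s))"
proof -
  have supp: "{\<delta>. P \<delta> \<noteq> 0} = shift_index s ` {\<delta>. (P \<circ> shift_index s) \<delta> \<noteq> 0}"
  proof (intro equalityI subsetI)
    fix \<delta> assume "\<delta> \<in> {\<delta>. P \<delta> \<noteq> 0}"
    moreover from this have "\<delta> = shift_index s (\<lambda>k. \<delta> (k + s))"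
      using low by (auto simp: shift_index_def involves_def fun_eq_iff)
    ultimately show "\<delta> \<in> shift_index s ` {\<delta>. (P \<circ> shift_index s) \<delta> \<noteq> 0}"
      by (metis (mono_tags, lifting) comp_apply image_eqI mem_Collect_eq)
  qed auto
  have prod: "(\<Prod>i<n. zbinom (x i) (shift_index s \<delta> i)) = (\<Prod>k<n - s. zbinom (x (k + s)) (\<delta> k))"
    for \<delta>
  proof -
    have "(\<Prod>i<n. zbinom (x i) (shift_index s \<delta> i)) = (\<Prod>i\<in>{s..<n}. zbinom (x i) (shift_index s \<delta> i))"
      by (rule prod.mono_neutral_right) (auto simp: shift_index_def)
    also have "\<dots> = (\<Prod>k<n - s. zbinom (x (k + s)) (\<delta> k))"
      using \<open>s \<le> n\<close> prod.shift_bounds_nat_ivl[of "\<lambda>i. zbinom (x i) (shift_index s \<delta> i)" 0 s "n - s"]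
      by (simp add: atLeast0LessThan)
    finally show ?thesis .
  qed
  show ?thesis
    unfolding pf_eval_def supp
    by (simp add: sum.reindex[OF inj_on_subset[OF inj_shift_index subset_UNIV]] prod)
qed

lemma pf_eval_fun_upd_binomial_expansion:
  assumes "polyfract n P" "j < n" and bound: "\<And>\<delta>. P \<delta> \<noteq> 0 \<Longrightarrow> \<delta> j \<le> N"
  shows "pf_eval n P (x(j := t)) = (\<Sum>d\<le>N. zscale (zbinom t d)
           (\<Sum>\<delta> | P \<delta> \<noteq> 0 \<and> \<delta> j = d. zscale (\<Prod>i\<in>{..<n} - {j}. zbinom (x i) (\<delta> i)) (P \<delta>)))"
proof -
  define S where "S = {\<delta>. P \<delta> \<noteq> 0}"
  have "finite S"
    using assms(1) by (simp add: polyfract_def S_def)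
  have "pf_eval n P (x(j := t))
      = (\<Sum>\<delta>\<in>S. zscale (zbinom t (\<delta> j)) (zscale (\<Prod>i\<in>{..<n} - {j}. zbinom (x i) (\<delta> i)) (P \<delta>)))"
    unfolding pf_eval_def S_def[symmetric]
  proof (rule sum.cong[OF refl])
    fix \<delta>
    have "(\<Prod>i<n. zbinom ((x(j := t)) i) (\<delta> i)) = zbinom t (\<delta> j) * (\<Prod>i\<in>{..<n} - {j}. zbinom (x i) (\<delta> i))"
      using \<open>j < n\<close> by (subst prod.remove[of _ j]) (auto intro!: prod.cong)
    then show "zscale (\<Prod>i<n. zbinom ((x(j := t)) i) (\<delta> i)) (P \<delta>)
        = zscale (zbinom t (\<delta> j)) (zscale (\<Prod>i\<in>{..<n} - {j}. zbinom (x i) (\<delta> i)) (P \<delta>))"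
      by (simp add: zscale_mult_left)
  qed
  also have "\<dots> = (\<Sum>d\<le>N. \<Sum>\<delta>\<in>{\<delta>\<in>S. \<delta> j = d}.
      zscale (zbinom t (\<delta> j)) (zscale (\<Prod>i\<in>{..<n} - {j}. zbinom (x i) (\<delta> i)) (P \<delta>)))"
    by (rule sum.group[symmetric]) (use \<open>finite S\<close> bound in \<open>auto simp: S_def\<close>)
  also have "\<dots> = (\<Sum>d\<le>N. zscale (zbinom t d)
      (\<Sum>\<delta> | P \<delta> \<noteq> 0 \<and> \<delta> j = d. zscale (\<Prod>i\<in>{..<n} - {j}. zbinom (x i) (\<delta> i)) (P \<delta>)))"
    unfolding zscale_sum_right S_def by (intro sum.cong refl) auto
  finally show ?thesis .
qed

lemma not_involves_if_periodic:
  fixes P :: "(nat \<Rightarrow> nat) \<Rightarrow> 'g::ab_group_add"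
  assumes pf: "polyfract n P" and "j < n"
    and kill: "\<And>b. zscale q b = 0 \<Longrightarrow> b = (0::'g)"
    and periodic: "\<And>x. pf_eval n P (x(j := x j + q)) = pf_eval n P x"
  shows "\<not> involves P j"
proof
  assume "involves P j"
  then obtain \<delta>1 where "0 < \<delta>1 j" "P \<delta>1 \<noteq> 0"
    by (auto simp: involves_def)
  define N where "N = Max ((\<lambda>\<delta>. \<delta> j) ` {\<delta>. P \<delta> \<noteq> 0})"
  define J where "J = {..<n} - {j}"
  have "finite {\<delta>. P \<delta> \<noteq> 0}"
    using pf by (simp add: polyfract_def)
  then have bound: "\<delta> j \<le> N" if "P \<delta> \<noteq> 0" for \<delta>
    using that by (auto simp: N_def)
  have slice: "(\<Sum>\<delta> | P \<delta> \<noteq> 0 \<and> \<delta> j = d. zscale (\<Prod>i\<in>J. zbinom (x i) (\<delta> i)) (P \<delta>)) = 0"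
    if "1 \<le> d" "d \<le> N" for x d
  proof (rule periodic_binomial_expansion_coeff_eq_0[OF kill _ _ that,
        where g = "\<lambda>t. pf_eval n P (x(j := t))"])
    show "pf_eval n P (x(j := t)) = (\<Sum>d\<le>N. zscale (zbinom t d)
        (\<Sum>\<delta> | P \<delta> \<noteq> 0 \<and> \<delta> j = d. zscale (\<Prod>i\<in>J. zbinom (x i) (\<delta> i)) (P \<delta>)))" for t
      unfolding J_def by (rule pf_eval_fun_upd_binomial_expansion[OF pf \<open>j < n\<close>]) (rule bound)
    show "pf_eval n P (x(j := t + q)) = pf_eval n P (x(j := t))" for t
      using periodic[of "x(j := t)"] by simp
  qed
  have "P \<delta>1 = 0"
  proof (rule binomial_sum_eq_0_imp_coeff_eq_0[where J = J and S = "{\<delta>. P \<delta> \<noteq> 0 \<and> \<delta> j = \<delta>1 j}" and c = P])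
    show "finite {\<delta>. P \<delta> \<noteq> 0 \<and> \<delta> j = \<delta>1 j}"
      using \<open>finite {\<delta>. P \<delta> \<noteq> 0}\<close> by simp
    show "\<delta> = \<delta>'" if "\<delta> \<in> {\<delta>. P \<delta> \<noteq> 0 \<and> \<delta> j = \<delta>1 j}" "\<delta>' \<in> {\<delta>. P \<delta> \<noteq> 0 \<and> \<delta> j = \<delta>1 j}"
      and "\<forall>i\<in>J. \<delta> i = \<delta>' i" for \<delta> \<delta>'
    proof
      fix i
      show "\<delta> i = \<delta>' i"
      proof (cases "i < n")
        case True
        then show ?thesis
          using that by (cases "i = j") (auto simp: J_def)
      next
        case False
        then have "\<delta> i = 0" "\<delta>' i = 0"
          using that polyfract_index_eq_0[OF pf] by (simp_all add: not_less)
        then show ?thesis by simp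
      qed
    qed
    show "\<And>x. (\<Sum>\<delta> | P \<delta> \<noteq> 0 \<and> \<delta> j = \<delta>1 j. zscale (\<Prod>i\<in>J. zbinom (x i) (\<delta> i)) (P \<delta>)) = 0"
      using slice \<open>0 < \<delta>1 j\<close> bound[OF \<open>P \<delta>1 \<noteq> 0\<close>] by simp
  qed (auto simp: J_def \<open>P \<delta>1 \<noteq> 0\<close>)
  with \<open>P \<delta>1 \<noteq> 0\<close> show False
    by simp
qed

lemma periodic_pf_iff_less:
  assumes "polyfract s P" "s \<le> n"
  shows "periodic_pf n q P \<longleftrightarrow> periodic_pf s q P"
proof -
  have "polyfract n P" and not_upper: "\<And>j. s \<le> j \<Longrightarrow> \<not> involves P j"
    using assms by (auto simp: polyfract_iff_involves)
  have "(\<forall>x j. j < n \<longrightarrow> pf_eval s P (x(j := x j + q j)) = pf_eval s P x) \<longleftrightarrow>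
      (\<forall>x j. j < s \<longrightarrow> pf_eval s P (x(j := x j + q j)) = pf_eval s P x)"
  proof (intro iffI allI impI)
    fix x j assume "\<forall>x j. j < s \<longrightarrow> pf_eval s P (x(j := x j + q j)) = pf_eval s P x"
    then show "pf_eval s P (x(j := x j + q j)) = pf_eval s P x"
      using pf_eval_fun_upd_not_involves[OF not_upper] by (cases "j < s") (auto simp: not_less)
  qed (use \<open>s \<le> n\<close> in auto)
  then show ?thesis
    unfolding periodic_pf_def pf_eval_polyfract_le[OF assms] using assms(1) \<open>polyfract n P\<close> by blast
qed

lemma pf_eval_periodic_iff_upper_vars:
  assumes not_lower: "\<And>j. j < s \<Longrightarrow> \<not> involves P j"
  shows "(\<forall>x j. j < n \<longrightarrow> pf_eval n P (x(j := x j + q j)) = pf_eval n P x) \<longleftrightarrow>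
    (\<forall>x j. j < n - s \<longrightarrow> pf_eval n P (x(j + s := x (j + s) + q (j + s))) = pf_eval n P x)"
proof (intro iffI allI impI)
  fix x j assume H: "\<forall>x j. j < n - s \<longrightarrow> pf_eval n P (x(j + s := x (j + s) + q (j + s))) = pf_eval n P x"
    and "j < n"
  show "pf_eval n P (x(j := x j + q j)) = pf_eval n P x"
  proof (cases "j < s")
    case True
    then show ?thesis
      by (intro pf_eval_fun_upd_not_involves not_lower)
  next
    case False
    then have "j - s < n - s" "j - s + s = j"
      using \<open>j < n\<close> by auto
    then show ?thesis
      using spec[OF spec[OF H, of x], of "j - s"] by simp
  qed
qed (simp add: less_diff_conv)

lemma periodic_pf_comp_shift_index_iff:
  assumes pf: "polyfract n P" and "s \<le> n" and not_lower: "\<And>j. j < s \<Longrightarrow> \<not> involves P j"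
  shows "periodic_pf n q P \<longleftrightarrow> periodic_pf (n - s) (\<lambda>j. q (j + s)) (P \<circ> shift_index s)"
    (is "_ \<longleftrightarrow> periodic_pf (n - s) ?q ?Q")
proof -
  have shift: "pf_eval n P x = pf_eval (n - s) ?Q (\<lambda>k. x (k + s))" for x
    by (rule pf_eval_comp_shift_index[OF pf \<open>s \<le> n\<close> not_lower])
  have upd: "(\<lambda>k. (x(j + s := v)) (k + s)) = (\<lambda>k. x (k + s))(j := v)" for x :: "nat \<Rightarrow> int" and j v
    by (auto simp: fun_eq_iff)
  have "(\<forall>x j. j < n \<longrightarrow> pf_eval n P (x(j := x j + q j)) = pf_eval n P x) \<longleftrightarrow>
      (\<forall>x j. j < n - s \<longrightarrow> pf_eval n P (x(j + s := x (j + s) + q (j + s))) = pf_eval n P x)"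
    by (rule pf_eval_periodic_iff_upper_vars[OF not_lower])
  also have "\<dots> \<longleftrightarrow> (\<forall>y j. j < n - s \<longrightarrow> pf_eval (n - s) ?Q (y(j := y j + q (j + s))) = pf_eval (n - s) ?Q y)"
  proof (intro iffI allI impI)
    fix y :: "nat \<Rightarrow> int" and j
    assume H: "\<forall>x j. j < n - s \<longrightarrow> pf_eval n P (x(j + s := x (j + s) + q (j + s))) = pf_eval n P x"
      and "j < n - s"
    define x where "x = (\<lambda>i. y (i - s))"
    have "pf_eval (n - s) ?Q (y(j := y j + q (j + s))) = pf_eval n P (x(j + s := x (j + s) + q (j + s)))"
      unfolding shift upd by (simp add: x_def)
    also have "\<dots> = pf_eval n P x"
      using H \<open>j < n - s\<close> by blast
    also have "\<dots> = pf_eval (n - s) ?Q y"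
      unfolding shift by (simp add: x_def)
    finally show "pf_eval (n - s) ?Q (y(j := y j + q (j + s))) = pf_eval (n - s) ?Q y" .
  next
    fix x :: "nat \<Rightarrow> int" and j
    assume H: "\<forall>y j. j < n - s \<longrightarrow> pf_eval (n - s) ?Q (y(j := y j + q (j + s))) = pf_eval (n - s) ?Q y"
      and "j < n - s"
    show "pf_eval n P (x(j + s := x (j + s) + q (j + s))) = pf_eval n P x"
      unfolding shift upd using spec[OF spec[OF H, of "\<lambda>k. x (k + s)"], of j] \<open>j < n - s\<close> by simp
  qed
  finally show ?thesis
    unfolding periodic_pf_def using pf polyfract_comp_shift_index[OF pf] by blast
qed

lemma periodic_pf_iff_involves_only_lower:
  fixes P :: "(nat \<Rightarrow> nat) \<Rightarrow> 'g::ab_group_add"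
  assumes pf: "polyfract n P" and "s \<le> n"
    and kill: "\<And>j b. s \<le> j \<Longrightarrow> j < n \<Longrightarrow> zscale (q j) b = 0 \<Longrightarrow> b = (0::'g)"
  shows "periodic_pf n q P \<longleftrightarrow> (\<forall>j. involves P j \<longrightarrow> j < s) \<and> periodic_pf s q P"
proof
  assume periodic: "periodic_pf n q P"
  have lower: "j < s" if "involves P j" for j
  proof (rule ccontr)
    assume "\<not> j < s"
    moreover have "j < n"
      using pf that by (simp add: polyfract_iff_involves)
    ultimately have "\<not> involves P j"
      using periodic by (intro not_involves_if_periodic[OF pf \<open>j < n\<close> kill]) (auto simp: periodic_pf_def)
    with that show False by simp
  qed
  then have "polyfract s P"
    using pf by (simp add: polyfract_iff_involves)
  with lower periodic show "(\<forall>j. involves P j \<longrightarrow> j < s) \<and> periodic_pf s q P"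
    using periodic_pf_iff_less[OF \<open>polyfract s P\<close> \<open>s \<le> n\<close>] by blast
next
  assume "(\<forall>j. involves P j \<longrightarrow> j < s) \<and> periodic_pf s q P"
  then have "polyfract s P" "periodic_pf s q P"
    by (simp_all add: periodic_pf_def)
  then show "periodic_pf n q P"
    using periodic_pf_iff_less[OF _ \<open>s \<le> n\<close>] by blast
qed

lemma periodic_pf_iff_involves_only_upper:
  fixes P :: "(nat \<Rightarrow> nat) \<Rightarrow> 'g::ab_group_add"
  assumes pf: "polyfract n P" and "s \<le> n"
    and kill: "\<And>j b. j < s \<Longrightarrow> zscale (q j) b = 0 \<Longrightarrow> b = (0::'g)"
  shows "periodic_pf n q P \<longleftrightarrow> (\<forall>j. involves P j \<longrightarrow> s \<le> j \<and> j < n)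
           \<and> periodic_pf (n - s) (\<lambda>j. q (j + s)) (P \<circ> shift_index s)"
proof -
  have "j < n" if "involves P j" for j
    using pf that by (simp add: polyfract_iff_involves)
  moreover have "\<not> involves P j" if "periodic_pf n q P" "j < s" for j
    using that \<open>s \<le> n\<close>
    by (intro not_involves_if_periodic[OF pf _ kill]) (auto simp: periodic_pf_def)
  ultimately show ?thesis
    using periodic_pf_comp_shift_index_iff[OF pf \<open>s \<le> n\<close>] by (meson not_le)
qed

theorem theorem3p14:
  fixes P :: "(nat \<Rightarrow> nat) \<Rightarrow> ('b1::{ab_group_add,finite} \<times> 'b2::{ab_group_add,finite})"
    and q :: "nat \<Rightarrow> int" and n s :: nat
  assumes "\<forall>j<n. q j > 1"
    and "s \<le> n"
    and "coprime (\<Prod>j<s. q j) (int (card (UNIV :: 'b2 set)))"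
    and "coprime (\<Prod>j\<in>{s..<n}. q j) (int (card (UNIV :: 'b1 set)))"
    and "polyfract n P"
  shows "periodic_pf n q P \<longleftrightarrow>
           ((\<forall>j. involves (fst \<circ> P) j \<longrightarrow> j < s)
            \<and> periodic_pf s q (fst \<circ> P)
            \<and> (\<forall>j. involves (snd \<circ> P) j \<longrightarrow> s \<le> j \<and> j < n)
            \<and> periodic_pf (n - s) (\<lambda>j. q (j + s))
                 (\<lambda>\<delta>. snd (P (\<lambda>j. if j < s then 0 else \<delta> (j - s)))))"
proof -
  have kill1: "b = 0" if "s \<le> j" "j < n" "zscale (q j) b = 0" for j and b :: 'b1
    using zscale_eq_0_coprime_prod_card[OF assms(4)] that by simp
  have kill2: "b = 0" if "j < s" "zscale (q j) b = 0" for j and b :: 'b2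
    using zscale_eq_0_coprime_prod_card[OF assms(3)] that by simp
  have pf1: "polyfract n (fst \<circ> P)" and pf2: "polyfract n (snd \<circ> P)"
    using \<open>polyfract n P\<close> polyfract_prod_iff by blast+
  have "(\<lambda>\<delta>. snd (P (\<lambda>j. if j < s then 0 else \<delta> (j - s)))) = snd \<circ> P \<circ> shift_index s"
    by (simp add: comp_def shift_index_def)
  moreover have "periodic_pf n q (fst \<circ> P) \<longleftrightarrow>
      (\<forall>j. involves (fst \<circ> P) j \<longrightarrow> j < s) \<and> periodic_pf s q (fst \<circ> P)"
    by (rule periodic_pf_iff_involves_only_lower[OF pf1 \<open>s \<le> n\<close> kill1])
  moreover have "periodic_pf n q (snd \<circ> P) \<longleftrightarrow>
      (\<forall>j. involves (snd \<circ> P) j \<longrightarrow> s \<le> j \<and> j < n)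
      \<and> periodic_pf (n - s) (\<lambda>j. q (j + s)) (snd \<circ> P \<circ> shift_index s)"
    by (rule periodic_pf_iff_involves_only_upper[OF pf2 \<open>s \<le> n\<close> kill2])
  ultimately show ?thesis
    by (simp add: periodic_pf_prod_iff)
qed

end
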